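(* Let $Y\sim$ exGPD$(\sigma,\xi)$ with $\sigma>0$, and let $\psi'$ denote the trigamma function. Then $\mathrm{Var}[Y]=\psi'(1)-\psi'(1-1/\xi)=\frac{\pi^2}{6}-\sum_{k=1}^{\infty}\frac{1}{(k-1/\xi)^2}$ if $\xi<0$; $\mathrm{Var}[Y]=\psi'(1)+\psi'(1/\xi)=\frac{\pi^2}{6}+\sum_{k=1}^{\infty}\frac{1}{(k+1/\xi-1)^2}$ if $\xi>0$; $\mathrm{Var}[Y]=\psi'(1)=\frac{\pi^2}{6}$ if $\xi=0$. In particular, $\mathrm{Var}[Y]$ depends only on $\xi$, and $\mathrm{Var}[Y]>\pi^2/6$, $=\pi^2/6$, or $<\pi^2/6$ according as $\xi>0$, $\xi=0$, or $\xi<0$.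
   Context: For $\sigma>0$ and $\xi\in\mathbb{R}$, the generalized Pareto distribution GPD$(\sigma,\xi)$ has distribution function $G(x)=1-(1+\xi x/\sigma)^{-1/\xi}$ for $\xi\neq 0$, with support $x\ge 0$ if $\xi>0$ and $0\le x\le -\sigma/\xi$ if $\xi<0$; for $\xi=0$ it is $G(x)=1-e^{-x/\sigma}$, $x\ge 0$. A random variable $Y$ has the exponentiated generalized Pareto distribution exGPD$(\sigma,\xi)$ if $Y=\log X$ with $X\sim$ GPD$(\sigma,\xi)$. Equivalently, for $\xi\neq0$ its distribution function is $F_Y(y)=1-(1+\xi e^y/\sigma)^{-1/\xi}$, with support $y\in\mathbb{R}$ if $\xi>0$ and $-\infty<y\le \log(-\sigma/\xi)$ if $\xi<0$. For $\xi=0$ it is $F_Y(y)=1-\exp(-e^{y}/\sigma)$, $y\in\mathbb{R}$. Its density is $f_Y(y)=\frac{e^y}{\sigma}(1+\xi e^y/\sigma)^{-1/\xi-1}$ on the support for $\xi\neq0$, and $f_Y(y)=\frac{1}{\sigma}e^{y-e^y/\sigma}$ for $\xi=0$. We write $\bar F_Y=1-F_Y$. *)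

theory Defs
  imports "HOL-Probability.Probability"
begin

definition trigamma :: "real \<Rightarrow> real" where
  "trigamma x = Polygamma 1 x"

text \<open>Lebesgue density of exGPD(sigma, xi) on the real line (0 off the support).
  For xi < 0 the support endpoint y = log(-sigma/xi) is a null set, so using strict
  positivity of the base is immaterial.\<close>
definition exgpd_density :: "real \<Rightarrow> real \<Rightarrow> real \<Rightarrow> real" where
  "exgpd_density \<sigma> \<xi> y =
     (if \<xi> = 0 then exp (y - exp y / \<sigma>) / \<sigma>
      else if 1 + \<xi> * exp y / \<sigma> > 0
           then exp y / \<sigma> * (1 + \<xi> * exp y / \<sigma>) powr (- 1 / \<xi> - 1)
           else 0)"

end

(*
  Write Y = log X. The moment generating function s \<mapsto> E[e^(sY)] = E[X^s] is finite near 0: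
  the substitutions u = e^y/\<sigma> (\<xi> = 0), u = -\<xi> e^y/\<sigma> (\<xi> < 0) and
  u = \<xi> e^y/(\<sigma> + \<xi> e^y) (\<xi> > 0) turn it into a Gamma or Beta integral, so its logarithm,
  the cumulant generating function K, is an explicit combination of log-Gamma values.
  Differentiating twice under the integral sign (dominated by e^(d|y|)) gives
  Var[Y] = K''(0), a sum or difference of trigamma values; the series and the comparison
  with \<pi>\<^sup>2/6 follow from \<psi>'(x) = \<Sum>k 1/(x+k)\<^sup>2 and \<psi>'(1) = \<pi>\<^sup>2/6.
*)

theory Submission
  imports Defs
begin

lemma has_real_derivative_integral:
  fixes F F' :: "real \<Rightarrow> 'a \<Rightarrow> real" and H :: "'a \<Rightarrow> real"
  assumes s: "s \<in> {a<..<b}"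
    and F_int: "\<And>t. t \<in> {a<..<b} \<Longrightarrow> integrable M (F t)"
    and F_deriv: "\<And>t x. t \<in> {a<..<b} \<Longrightarrow> x \<in> space M \<Longrightarrow> ((\<lambda>t. F t x) has_real_derivative F' t x) (at t)"
    and F'_meas: "F' s \<in> borel_measurable M"
    and H_int: "integrable M H"
    and F'_bound: "\<And>t x. t \<in> {a<..<b} \<Longrightarrow> x \<in> space M \<Longrightarrow> \<bar>F' t x\<bar> \<le> H x"
  shows "((\<lambda>t. \<integral>x. F t x \<partial>M) has_real_derivative (\<integral>x. F' s x \<partial>M)) (at s)"
  unfolding DERIV_def tendsto_at_iff_sequentially comp_def
proof (intro allI impI)
  fix X :: "nat \<Rightarrow> real"
  assume X: "\<forall>i. X i \<in> UNIV - {0}" "X \<longlonglongrightarrow> 0"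
  let ?q = "\<lambda>i x. (F (s + X i) x - F s x) / X i"
  have "(\<lambda>i. s + X i) \<longlonglongrightarrow> s"
    using tendsto_add[OF tendsto_const X(2), of s] by simp
  then have "eventually (\<lambda>i. s + X i \<in> {a<..<b}) sequentially"
    using s by (rule topological_tendstoD[OF _ open_greaterThanLessThan])
  then obtain N where N: "\<And>i. N \<le> i \<Longrightarrow> s + X i \<in> {a<..<b}"
    by (auto simp: eventually_sequentially)
  have q_bound: "\<bar>?q i x\<bar> \<le> H x" if "N \<le> i" "x \<in> space M" for i x
  proof -
    have "\<bar>F (s + X i) x - F s x\<bar> \<le> H x * \<bar>(s + X i) - s\<bar>"
      by (rule field_differentiable_bound[of "{a<..<b}" "\<lambda>t. F t x" "\<lambda>t. F' t x", simplified])
         (use F_deriv[OF _ that(2)] F'_bound[OF _ that(2)] N[OF that(1)] s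
           in \<open>auto intro: has_field_derivative_at_within\<close>)
    then show ?thesis
      using X(1) by (simp add: abs_divide divide_le_eq)
  qed
  have q_lim: "(\<lambda>i. ?q i x) \<longlonglongrightarrow> F' s x" if "x \<in> space M" for x
    using F_deriv[OF s that] X unfolding DERIV_def tendsto_at_iff_sequentially comp_def
    by auto
  have q_int: "(\<integral>x. ?q i x \<partial>M) = ((\<integral>x. F (s + X i) x \<partial>M) - (\<integral>x. F s x \<partial>M)) / X i"
    if "N \<le> i" for i
    using F_int[OF s] F_int[OF N[OF that]] by simp
  have "(\<lambda>i. \<integral>x. ?q (i + N) x \<partial>M) \<longlonglongrightarrow> (\<integral>x. F' s x \<partial>M)"
  proof (rule integral_dominated_convergence[OF F'_meas _ H_int])
    show "?q (i + N) \<in> borel_measurable M" for i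
      using F_int[OF s] F_int[OF N[of "i + N"]] by auto
    show "AE x in M. (\<lambda>i. ?q (i + N) x) \<longlonglongrightarrow> F' s x"
      by (rule AE_I2) (rule LIMSEQ_ignore_initial_segment[OF q_lim])
  qed (use q_bound in auto)
  then show "(\<lambda>i. ((\<integral>x. F (s + X i) x \<partial>M) - (\<integral>x. F s x \<partial>M)) / X i) \<longlonglongrightarrow> (\<integral>x. F' s x \<partial>M)"
    unfolding q_int[OF le_add2] by (rule LIMSEQ_offset)
qed

lemma abs_power_mult_exp_le:
  fixes c s y :: real
  assumes c: "0 < c" and s: "\<bar>s\<bar> \<le> c" and k: "k \<in> {1, 2}"
  shows "\<bar>y\<bar> ^ k * exp (s * y) \<le> (1 / c + 4 / c\<^sup>2) * (exp (2 * c * y) + exp (- 2 * c * y))"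
proof -
  let ?C = "1 / c + 4 / c\<^sup>2" and ?e = "exp (c * \<bar>y\<bar>)"
  have "c * \<bar>y\<bar> \<le> ?e"
    using exp_ge_add_one_self[of "c * \<bar>y\<bar>"] by linarith
  then have y1: "\<bar>y\<bar> \<le> ?e / c"
    using c by (simp add: field_simps)
  have "c * \<bar>y\<bar> / 2 \<le> exp (c * \<bar>y\<bar> / 2)"
    using exp_ge_add_one_self[of "c * \<bar>y\<bar> / 2"] by linarith
  then have "(c * \<bar>y\<bar> / 2)\<^sup>2 \<le> (exp (c * \<bar>y\<bar> / 2))\<^sup>2"
    using c by (intro power_mono) auto
  then have y2: "\<bar>y\<bar>\<^sup>2 \<le> 4 * ?e / c\<^sup>2"
    using c by (simp add: field_simps power2_eq_square flip: exp_add)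
  have "0 \<le> ?e / c" "0 \<le> 4 * ?e / c\<^sup>2"
    using c by auto
  then have "\<bar>y\<bar> ^ k \<le> ?e / c + 4 * ?e / c\<^sup>2"
    using k y1 y2 by (smt (verit) empty_iff insert_iff power2_abs power_one_right)
  also have "\<dots> = ?C * ?e"
    by (simp add: distrib_right)
  finally have "\<bar>y\<bar> ^ k \<le> ?C * ?e" .
  moreover have "exp (s * y) \<le> ?e"
    using s abs_ge_self[of "s * y"] mult_right_mono[OF s abs_ge_zero[of y]]
    by (simp add: abs_mult)
  ultimately have "\<bar>y\<bar> ^ k * exp (s * y) \<le> ?C * ?e * ?e"
    using c by (intro mult_mono) auto
  also have "?C * ?e * ?e \<le> ?C * (exp (2 * c * y) + exp (- 2 * c * y))"
  proof -
    have "?e * ?e \<le> exp (2 * c * y) + exp (- 2 * c * y)"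
      by (cases "0 \<le> y") (auto simp: add_increasing add_increasing2 simp flip: exp_add)
    then show ?thesis
      using c by (simp add: mult.assoc mult_left_mono)
  qed
  finally show ?thesis .
qed

lemma integrable_power_mult_exp:
  fixes Y :: "'a \<Rightarrow> real"
  assumes d: "0 < d" and Y: "Y \<in> borel_measurable M"
    and mgf_int: "\<And>s. \<bar>s\<bar> \<le> d \<Longrightarrow> integrable M (\<lambda>x. exp (s * Y x))"
    and t: "\<bar>t\<bar> \<le> d / 2" and k: "k \<le> 2"
  shows "integrable M (\<lambda>x. Y x ^ k * exp (t * Y x))"
proof (cases "k = 0")
  case True
  then show ?thesis using mgf_int[of t] t d by simp
next
  case False
  then have k12: "k \<in> {1, 2}" using k by auto
  let ?H = "\<lambda>x. (1 / (d/2) + 4 / (d/2)\<^sup>2) * (exp (d * Y x) + exp (- d * Y x))"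
  show ?thesis
  proof (rule Bochner_Integration.integrable_bound)
    show "integrable M ?H"
      using mgf_int[of d] mgf_int[of "- d"] d by auto
    show "AE x in M. norm (Y x ^ k * exp (t * Y x)) \<le> norm (?H x)"
      using abs_power_mult_exp_le[OF _ t k12] d
      by (auto simp: abs_mult power_abs intro!: AE_I2 order_trans[OF _ abs_ge_self])
  qed (use Y in measurable)
qed

lemma has_real_derivative_integral_power_mult_exp:
  fixes Y :: "'a \<Rightarrow> real"
  assumes d: "0 < d" and Y: "Y \<in> borel_measurable M"
    and mgf_int: "\<And>s. \<bar>s\<bar> \<le> d \<Longrightarrow> integrable M (\<lambda>x. exp (s * Y x))"
    and t: "\<bar>t\<bar> < d / 2" and k: "k \<le> 1"
  shows "((\<lambda>t. \<integral>x. Y x ^ k * exp (t * Y x) \<partial>M) has_real_derivative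
           (\<integral>x. Y x ^ Suc k * exp (t * Y x) \<partial>M)) (at t)"
proof (rule has_real_derivative_integral[where a = "- (d/2)" and b = "d/2"
    and H = "\<lambda>x. (1 / (d/2) + 4 / (d/2)\<^sup>2) * (exp (d * Y x) + exp (- d * Y x))"])
  show "t \<in> {- (d/2)<..<d/2}" using t by auto
  show "((\<lambda>t. Y x ^ k * exp (t * Y x)) has_real_derivative Y x ^ Suc k * exp (t' * Y x)) (at t')"
    for t' x
    by (auto intro!: derivative_eq_intros)
  show "integrable M (\<lambda>x. Y x ^ k * exp (t' * Y x))" if "t' \<in> {- (d/2)<..<d/2}" for t'
    using integrable_power_mult_exp[OF d Y mgf_int, of t' k] that k by auto
  show "integrable M (\<lambda>x. (1 / (d/2) + 4 / (d/2)\<^sup>2) * (exp (d * Y x) + exp (- d * Y x)))"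
    using mgf_int[of d] mgf_int[of "- d"] d by auto
  show "\<bar>Y x ^ Suc k * exp (t' * Y x)\<bar>
      \<le> (1 / (d/2) + 4 / (d/2)\<^sup>2) * (exp (d * Y x) + exp (- d * Y x))"
    if "t' \<in> {- (d/2)<..<d/2}" for t' x
  proof -
    have "\<bar>t'\<bar> \<le> d/2" "Suc k \<in> {1, 2}"
      using that k by auto
    from abs_power_mult_exp_le[OF _ this, of "Y x"] d show ?thesis
      by (simp add: abs_mult power_abs)
  qed
qed (use Y in measurable)

lemma (in prob_space) moments_from_cgf:
  fixes Y :: "'a \<Rightarrow> real" and K K' :: "real \<Rightarrow> real"
  assumes d: "0 < d" and Y: "random_variable borel Y"
    and mgf: "\<And>s. \<bar>s\<bar> \<le> d \<Longrightarrow> has_bochner_integral M (\<lambda>x. exp (s * Y x)) (exp (K s))"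
    and K: "\<And>s. \<bar>s\<bar> < d \<Longrightarrow> (K has_real_derivative K' s) (at s)"
    and K': "(K' has_real_derivative K'') (at 0)"
  shows "integrable M (\<lambda>x. (Y x)\<^sup>2)" and "expectation Y = K' 0" and "variance Y = K''"
proof -
  have Y_meas: "Y \<in> borel_measurable M" using Y by simp
  have mgf_int: "integrable M (\<lambda>x. exp (s * Y x))" if "\<bar>s\<bar> \<le> d" for s
    using mgf[OF that] by (rule integrable.intros)
  let ?m = "\<lambda>k t. \<integral>x. Y x ^ k * exp (t * Y x) \<partial>M"
  have deriv: "((\<lambda>t. ?m k t) has_real_derivative ?m (Suc k) t) (at t)"
    if "\<bar>t\<bar> < d / 2" "k \<le> 1" for t k
    by (rule has_real_derivative_integral_power_mult_exp[OF d Y_meas]) (use mgf_int that in auto)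
  have moment_int: "integrable M (\<lambda>x. Y x ^ k)" if "k \<le> 2" for k
    using integrable_power_mult_exp[OF d Y_meas, of 0 k] mgf_int that d by simp
  have m0: "?m 0 t = exp (K t)" if "\<bar>t\<bar> < d / 2" for t
    using mgf[of t] that d by (simp add: has_bochner_integral_integral_eq)
  have m1: "?m (Suc 0) t = exp (K t) * K' t" if "\<bar>t\<bar> < d / 2" for t
  proof (rule DERIV_unique)
    show "((\<lambda>t. exp (K t)) has_real_derivative ?m (Suc 0) t) (at t)"
      by (rule has_field_derivative_transform_within_open[OF deriv[OF that, of 0], of "{- (d/2)<..<d/2}"])
         (use that m0 in auto)
    show "((\<lambda>t. exp (K t)) has_real_derivative exp (K t) * K' t) (at t)"
      using K[of t] that by (auto intro!: derivative_eq_intros)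
  qed
  have m2: "?m (Suc (Suc 0)) 0 = exp (K 0) * (K' 0)\<^sup>2 + exp (K 0) * K''"
  proof (rule DERIV_unique)
    show "((\<lambda>t. exp (K t) * K' t) has_real_derivative ?m (Suc (Suc 0)) 0) (at 0)"
      by (rule has_field_derivative_transform_within_open[OF deriv[of 0 "Suc 0"], of "{- (d/2)<..<d/2}"])
         (use d m1 in auto)
    show "((\<lambda>t. exp (K t) * K' t) has_real_derivative exp (K 0) * (K' 0)\<^sup>2 + exp (K 0) * K'') (at 0)"
      using K[of 0] K' d by (auto intro!: derivative_eq_intros simp: power2_eq_square)
  qed
  have "exp (K 0) = 1"
    using m0[of 0] d prob_space by simp
  then have EY: "expectation Y = K' 0" and EY2: "expectation (\<lambda>x. (Y x)\<^sup>2) = (K' 0)\<^sup>2 + K''"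
    using m1[of 0] m2 d by (simp_all add: power2_eq_square)
  show Y2_int: "integrable M (\<lambda>x. (Y x)\<^sup>2)"
    using moment_int[of 2] by simp
  show "expectation Y = K' 0" by (rule EY)
  have "integrable M Y"
    using moment_int[of 1] by simp
  then show "variance Y = K''"
    using variance_eq[OF _ Y2_int] EY EY2 by simp
qed

lemma has_bochner_integral_lborel_substitution:
  fixes g g' k h :: "real \<Rightarrow> real"
  assumes S: "S \<in> sets lebesgue" and g_bij: "bij_betw g S T"
    and g: "\<And>x. x \<in> S \<Longrightarrow> (g has_real_derivative g' x) (at x within S)"
    and k: "(k has_integral R) T" and k_nonneg: "\<And>u. u \<in> T \<Longrightarrow> 0 \<le> k u"
    and h: "\<And>x. h x = (if x \<in> S then \<bar>g' x\<bar> * k (g x) else 0)"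
    and h_meas: "h \<in> borel_measurable borel"
  shows "has_bochner_integral lborel h R"
proof -
  have T: "T = g ` S" and inj: "inj_on g S"
    using g_bij by (auto simp: bij_betw_def)
  have "k absolutely_integrable_on T"
    using k k_nonneg by (intro nonnegative_absolutely_integrable_1) auto
  then have "(\<lambda>x. \<bar>g' x\<bar> * k (g x)) absolutely_integrable_on S \<and>
      integral S (\<lambda>x. \<bar>g' x\<bar> * k (g x)) = R"
    using has_absolute_integral_change_of_variables_1'[OF S g inj] k T by (simp add: integral_unique)
  then have "((\<lambda>x. \<bar>g' x\<bar> * k (g x)) has_integral R) S"
    using set_lebesgue_integral_eq_integral(1) by (metis has_integral_integral)
  moreover have "h = (\<lambda>x. if x \<in> S then \<bar>g' x\<bar> * k (g x) else 0)"
    using h by auto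
  ultimately have h_int: "(h has_integral R) UNIV"
    by (simp add: has_integral_restrict_UNIV)
  have h_nonneg: "0 \<le> h x" for x
    using k_nonneg g_bij by (auto simp: h bij_betw_def)
  show ?thesis
  proof (rule has_bochner_integral_nn_integral)
    show "0 \<le> R" using has_integral_nonneg[OF h_int h_nonneg] .
    show "(\<integral>\<^sup>+x. ennreal (h x) \<partial>lborel) = ennreal R"
      using nn_integral_has_integral_lborel[OF h_meas h_nonneg h_int] by simp
  qed (use h_meas h_nonneg in auto)
qed

lemma Gamma_integral_real_greaterThan:
  assumes "0 < (x::real)"
  shows "((\<lambda>t. t powr (x - 1) / exp t) has_integral Gamma x) {0<..}"
  using Gamma_integral_real[OF assms]
  by (rule has_integral_spike_set_eq[THEN iffD1, rotated 2])
     (auto intro: negligible_subset[of "{0}"])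

lemma has_integral_Beta_real_greaterThanLessThan:
  assumes "0 < (a::real)" "0 < b"
  shows "((\<lambda>t. t powr (a - 1) * (1 - t) powr (b - 1)) has_integral Beta a b) {0<..<1}"
  using has_integral_Beta_real[OF assms]
  by (rule has_integral_spike_set_eq[THEN iffD1, rotated 2])
     (auto intro: negligible_subset[of "{0, 1}"])

lemma exgpd_density_measurable [measurable]: "exgpd_density \<sigma> \<xi> \<in> borel_measurable borel"
  unfolding exgpd_density_def[abs_def] by measurable

lemma exgpd_density_nonneg: "0 < \<sigma> \<Longrightarrow> 0 \<le> exgpd_density \<sigma> \<xi> y"
  unfolding exgpd_density_def by auto

lemma exgpd_mgf_zero:
  assumes \<sigma>: "0 < \<sigma>" and s: "-1 < s"
  shows "has_bochner_integral lborel (\<lambda>y. exgpd_density \<sigma> 0 y * exp (s * y)) (\<sigma> powr s * Gamma (s + 1))"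
proof (rule has_bochner_integral_lborel_substitution[where S = UNIV and g = "\<lambda>y. exp y / \<sigma>"])
  let ?k = "\<lambda>u. \<sigma> powr s * (u powr (s + 1 - 1) / exp u)"
  show "bij_betw (\<lambda>y. exp y / \<sigma>) UNIV {0<..}"
  proof (rule bij_betw_imageI)
    show "inj_on (\<lambda>y. exp y / \<sigma>) UNIV"
      using \<sigma> by (auto intro: inj_onI)
    have "u \<in> range (\<lambda>y. exp y / \<sigma>)" if "0 < u" for u
      using that \<sigma> by (intro image_eqI[of _ _ "ln (u * \<sigma>)"]) auto
    then show "range (\<lambda>y. exp y / \<sigma>) = {0<..}"
      using \<sigma> by auto
  qed
  show "(?k has_integral \<sigma> powr s * Gamma (s + 1)) {0<..}"
    by (intro has_integral_mult_right Gamma_integral_real_greaterThan) (use s in simp)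
  show "0 \<le> ?k u" for u by simp
  show "exgpd_density \<sigma> 0 x * exp (s * x) = (if x \<in> UNIV then \<bar>exp x / \<sigma>\<bar> * ?k (exp x / \<sigma>) else 0)" for x
  proof -
    have "(exp x / \<sigma>) powr s = exp (s * x) / \<sigma> powr s"
      using \<sigma> by (simp add: powr_def ln_div exp_diff[symmetric] algebra_simps)
    then show ?thesis
      using \<sigma> by (simp add: exgpd_density_def exp_diff)
  qed
qed (use \<sigma> in \<open>auto intro!: derivative_eq_intros\<close>)

lemma powr_mult_exp:
  fixes a c s x :: real
  assumes "0 < a" "0 < c" "a * c = 1"
  shows "a powr s * (c * exp x) powr s = exp (s * x)"
proof -
  have "a powr s * (c * exp x) powr s = (a * (c * exp x)) powr s"
    using assms by (simp add: powr_mult)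
  also have "a * (c * exp x) = exp x"
    using assms(3) by (simp flip: mult.assoc)
  finally show ?thesis
    by (simp add: powr_def)
qed

lemma bij_betw_exp_scaled:
  fixes c :: real
  assumes "0 < c"
  shows "bij_betw (\<lambda>y. c * exp y) {y. c * exp y < 1} {0<..<1}"
proof (rule bij_betw_imageI)
  show "inj_on (\<lambda>y. c * exp y) {y. c * exp y < 1}"
    using assms by (intro inj_onI) simp
  have "u \<in> (\<lambda>y. c * exp y) ` {y. c * exp y < 1}" if "0 < u" "u < 1" for u
    using that assms by (intro image_eqI[of _ _ "ln (u / c)"]) auto
  then show "(\<lambda>y. c * exp y) ` {y. c * exp y < 1} = {0<..<1}"
    using assms by auto
qed

lemma bij_betw_logistic_exp:
  fixes c :: real
  assumes "0 < c"
  shows "bij_betw (\<lambda>y. c * exp y / (1 + c * exp y)) UNIV {0<..<1}"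
proof (rule bij_betw_imageI)
  let ?g = "\<lambda>y::real. c * exp y / (1 + c * exp y)"
  have "strict_mono ?g"
    using assms by (intro strict_monoI) (simp add: field_simps add_pos_pos)
  then show "inj_on ?g UNIV"
    by (rule strict_mono_on_imp_inj_on)
  show "range ?g = {0<..<1}"
  proof (intro subset_antisym image_subsetI subsetI)
    show "?g y \<in> {0<..<1}" for y
      using assms by (auto simp: field_simps add_pos_pos)
    show "v \<in> range ?g" if "v \<in> {0<..<1}" for v
    proof (rule range_eqI)
      show "v = ?g (ln (v / ((1 - v) * c)))"
        using that assms by (simp add: field_simps)
    qed
  qed
qed

lemma exgpd_mgf_neg:
  assumes \<sigma>: "0 < \<sigma>" and s: "-1 < s" and \<xi>: "\<xi> < 0"
  shows "has_bochner_integral lborel (\<lambda>y. exgpd_density \<sigma> \<xi> y * exp (s * y))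
           ((-1/\<xi>) * (\<sigma> * (-1/\<xi>)) powr s * Beta (s + 1) (-1/\<xi>))"
proof -
  define b where "b = -1/\<xi>"
  define c where "c = -\<xi>/\<sigma>"
  have b: "0 < b" and c: "0 < c" and bc: "\<sigma> * b * c = 1"
    using \<xi> \<sigma> by (auto simp: b_def c_def field_simps)
  define S where "S = {y. c * exp y < 1}"
  define k where "k u = b * (\<sigma> * b) powr s * (u powr (s + 1 - 1) * (1 - u) powr (b - 1))" for u
  have "open S"
    unfolding S_def by (intro open_Collect_less continuous_intros)
  have density: "exgpd_density \<sigma> \<xi> x * exp (s * x) =
      (if x \<in> S then \<bar>c * exp x\<bar> * k (c * exp x) else 0)" for x
  proof -
    have base: "1 + \<xi> * exp x / \<sigma> = 1 - c * exp x"
      using \<sigma> by (simp add: c_def field_simps)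
    have powers: "(\<sigma> * b) powr s * (c * exp x) powr s = exp (s * x)"
      using \<sigma> b c bc by (intro powr_mult_exp) auto
    have "exgpd_density \<sigma> \<xi> x * exp (s * x) = \<bar>c * exp x\<bar> * k (c * exp x)" if "x \<in> S"
    proof -
      have "exgpd_density \<sigma> \<xi> x = exp x / \<sigma> * (1 - c * exp x) powr (b - 1)"
        using \<xi> that by (simp add: exgpd_density_def base S_def b_def)
      also have "exp x / \<sigma> = b * c * exp x"
        using \<sigma> bc by (simp add: field_simps)
      finally show ?thesis
        using c by (simp add: k_def flip: powers)
    qed
    moreover have "x \<notin> S \<Longrightarrow> exgpd_density \<sigma> \<xi> x = 0"
      using \<xi> by (simp add: exgpd_density_def base S_def)
    ultimately show ?thesis by simp
  qed
  have "has_bochner_integral lborel (\<lambda>y. exgpd_density \<sigma> \<xi> y * exp (s * y))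
           (b * (\<sigma> * b) powr s * Beta (s + 1) b)"
  proof (rule has_bochner_integral_lborel_substitution
      [where S = S and g = "\<lambda>y. c * exp y" and g' = "\<lambda>y. c * exp y" and k = k])
    show "bij_betw (\<lambda>y. c * exp y) S {0<..<1}"
      unfolding S_def by (rule bij_betw_exp_scaled[OF c])
    show "(k has_integral b * (\<sigma> * b) powr s * Beta (s + 1) b) {0<..<1}"
      unfolding k_def
      by (intro has_integral_mult_right has_integral_Beta_real_greaterThanLessThan) (use s b in auto)
    show "(\<lambda>y. exgpd_density \<sigma> \<xi> y * exp (s * y)) \<in> borel_measurable borel"
      by measurable
  qed (use \<open>open S\<close> b density in \<open>auto intro!: derivative_eq_intros simp: k_def\<close>)
  then show ?thesis by (simp add: b_def)
qed

lemma exgpd_mgf_pos: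
  assumes \<sigma>: "0 < \<sigma>" and s: "-1 < s" "s < 1/\<xi>" and \<xi>: "0 < \<xi>"
  shows "has_bochner_integral lborel (\<lambda>y. exgpd_density \<sigma> \<xi> y * exp (s * y))
           ((1/\<xi>) * (\<sigma> * (1/\<xi>)) powr s * Beta (s + 1) (1/\<xi> - s))"
proof -
  define a where "a = 1/\<xi>"
  define c where "c = \<xi>/\<sigma>"
  have a: "0 < a" "s < a" and c: "0 < c" and ac: "\<sigma> * a * c = 1"
    using \<xi> \<sigma> s by (auto simp: a_def c_def)
  define g where "g y = c * exp y / (1 + c * exp y)" for y
  define g' where "g' y = c * exp y / (1 + c * exp y)\<^sup>2" for y
  define k where "k v = a * (\<sigma> * a) powr s * (v powr (s + 1 - 1) * (1 - v) powr ((a - s) - 1))" for v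
  have density: "exgpd_density \<sigma> \<xi> x * exp (s * x) = (if x \<in> UNIV then \<bar>g' x\<bar> * k (g x) else 0)" for x
  proof -
    define u where "u = c * exp x"
    have u: "0 < u" using c by (simp add: u_def)
    have ac': "a * c = 1 / \<sigma>" using ac \<sigma> by (simp add: field_simps)
    have powers: "(\<sigma> * a) powr s * u powr s = exp (s * x)"
      unfolding u_def using \<sigma> a c ac by (intro powr_mult_exp) auto
    have "- a - 1 = -2 + - s + - (a - s - 1)" by simp
    then have "(1 + u) powr (- a - 1) = (1 + u) powr (-2) * (1 + u) powr (- s) * (1 + u) powr (- (a - s - 1))"
      using u by (simp only: powr_add)
    then have "exgpd_density \<sigma> \<xi> x = (a * c) * exp x * (1 + u) powr (-2) * (1 + u) powr (- s) * (1 + u) powr (- (a - s - 1))"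
      using \<xi> u by (simp add: exgpd_density_def u_def c_def a_def ac' field_simps)
    also have "\<dots> = \<bar>g' x\<bar> * k (g x) / exp (s * x)"
      using u \<sigma> a by (simp add: g'_def g_def k_def u_def[symmetric] powr_divide powr_minus_divide
          powr_realpow field_simps flip: powers powr_add)
    finally show ?thesis by simp
  qed
  have "has_bochner_integral lborel (\<lambda>y. exgpd_density \<sigma> \<xi> y * exp (s * y))
           (a * (\<sigma> * a) powr s * Beta (s + 1) (a - s))"
  proof (rule has_bochner_integral_lborel_substitution[where S = UNIV and g = g and g' = g' and k = k])
    show "bij_betw g UNIV {0<..<1}"
      unfolding g_def[abs_def] by (rule bij_betw_logistic_exp[OF c])
    show "(k has_integral a * (\<sigma> * a) powr s * Beta (s + 1) (a - s)) {0<..<1}"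
      unfolding k_def
      by (intro has_integral_mult_right has_integral_Beta_real_greaterThanLessThan) (use s a in auto)
    show "(g has_real_derivative g' x) (at x within UNIV)" for x
      unfolding g_def[abs_def] g'_def using c add_pos_pos[OF zero_less_one, of "c * exp x"]
      by (auto intro!: derivative_eq_intros simp: field_simps power2_eq_square)
    show "(\<lambda>y. exgpd_density \<sigma> \<xi> y * exp (s * y)) \<in> borel_measurable borel"
      by measurable
  qed (use a density in \<open>auto simp: k_def\<close>)
  then show ?thesis by (simp add: a_def)
qed

definition exgpd_cgf :: "real \<Rightarrow> real \<Rightarrow> real \<Rightarrow> real" where
  "exgpd_cgf \<sigma> \<xi> s =
     (if \<xi> = 0 then s * ln \<sigma> + ln_Gamma (s + 1)
      else if \<xi> < 0 then ln (-1/\<xi>) + s * ln (\<sigma> * (-1/\<xi>)) + ln_Gamma (s + 1) + ln_Gamma (-1/\<xi>)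
        - ln_Gamma (s + 1 - 1/\<xi>)
      else ln (1/\<xi>) + s * ln (\<sigma> * (1/\<xi>)) + ln_Gamma (s + 1) + ln_Gamma (1/\<xi> - s)
        - ln_Gamma (1/\<xi> + 1))"

definition exgpd_cgf_deriv :: "real \<Rightarrow> real \<Rightarrow> real \<Rightarrow> real" where
  "exgpd_cgf_deriv \<sigma> \<xi> s =
     (if \<xi> = 0 then ln \<sigma> + Digamma (s + 1)
      else if \<xi> < 0 then ln (\<sigma> * (-1/\<xi>)) + Digamma (s + 1) - Digamma (s + 1 - 1/\<xi>)
      else ln (\<sigma> * (1/\<xi>)) + Digamma (s + 1) - Digamma (1/\<xi> - s))"

definition exgpd_variance :: "real \<Rightarrow> real" where
  "exgpd_variance \<xi> =
     (if \<xi> = 0 then trigamma 1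
      else if \<xi> < 0 then trigamma 1 - trigamma (1 - 1/\<xi>)
      else trigamma 1 + trigamma (1/\<xi>))"

lemma exgpd_mgf:
  assumes \<sigma>: "0 < \<sigma>" and s: "-1 < s" "0 < \<xi> \<Longrightarrow> s < 1/\<xi>"
  shows "has_bochner_integral lborel (\<lambda>y. exgpd_density \<sigma> \<xi> y * exp (s * y)) (exp (exgpd_cgf \<sigma> \<xi> s))"
proof -
  have Gamma: "Gamma x = exp (ln_Gamma x)" if "0 < x" for x :: real
    using that by (rule Gamma_real_pos_exp)
  consider "\<xi> = 0" | "\<xi> < 0" | "0 < \<xi>" by linarith
  then show ?thesis
  proof cases
    case 1
    with exgpd_mgf_zero[OF \<sigma> s(1)] show ?thesis
      using \<sigma> s by (simp add: exgpd_cgf_def powr_def Gamma exp_add)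
  next
    case 2
    have "1/\<xi> < 0" using 2 by simp
    then have "0 < s + 1 - 1/\<xi>" using s(1) by linarith
    from Gamma[OF this] Gamma[of "s + 1"] Gamma[of "-1/\<xi>"] s(1) \<open>1/\<xi> < 0\<close> have
      "Beta (s + 1) (-1/\<xi>) = exp (ln_Gamma (s + 1) + ln_Gamma (-1/\<xi>) - ln_Gamma (s + 1 - 1/\<xi>))"
      by (simp add: Beta_def exp_add exp_diff)
    with exgpd_mgf_neg[OF \<sigma> s(1) 2] show ?thesis
      using \<sigma> 2 by (simp add: exgpd_cgf_def powr_def exp_add exp_diff mult_ac)
  next
    case 3
    with exgpd_mgf_pos[OF \<sigma> s(1) s(2)] show ?thesis
      using \<sigma> s by (simp add: exgpd_cgf_def powr_def Gamma Beta_def exp_add exp_diff add.commute mult_ac)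
  qed
qed

lemma not_nonpos_Ints_real: "0 < (x::real) \<Longrightarrow> x \<notin> \<int>\<^sub>\<le>\<^sub>0"
  by (auto elim!: nonpos_Ints_cases)

lemma exgpd_cgf_has_real_derivative:
  assumes s: "-1 < s" "0 < \<xi> \<Longrightarrow> s < 1/\<xi>"
  shows "(exgpd_cgf \<sigma> \<xi> has_real_derivative exgpd_cgf_deriv \<sigma> \<xi> s) (at s)"
proof -
  consider "\<xi> = 0" | "\<xi> < 0" | "0 < \<xi>" by linarith
  then show ?thesis
  proof cases
    case 2
    then have "1/\<xi> < 0" by simp
    then have "0 < -1/\<xi>" "0 < s + 1 - 1/\<xi>"
      using s(1) by linarith+
    then show ?thesis
      using s(1) 2 unfolding exgpd_cgf_def[abs_def] exgpd_cgf_deriv_def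
      by (auto intro!: derivative_eq_intros not_nonpos_Ints_real)
  next
    case 3
    then have "0 < 1/\<xi> - s" using s(2) by simp
    then show ?thesis
      using s(1) 3 unfolding exgpd_cgf_def[abs_def] exgpd_cgf_deriv_def
      by (auto intro!: derivative_eq_intros not_nonpos_Ints_real)
  qed (use s(1) in \<open>auto intro!: derivative_eq_intros not_nonpos_Ints_real
        simp: exgpd_cgf_def[abs_def] exgpd_cgf_deriv_def\<close>)
qed

lemma exgpd_cgf_deriv_has_real_derivative:
  "(exgpd_cgf_deriv \<sigma> \<xi> has_real_derivative exgpd_variance \<xi>) (at 0)"
proof -
  consider "\<xi> = 0" | "\<xi> < 0" | "0 < \<xi>" by linarith
  then show ?thesis
  proof cases
    case 2
    then have "0 < 1 - 1/\<xi>"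
      using divide_less_0_1_iff[of \<xi>] by linarith
    then show ?thesis
      using 2 unfolding exgpd_cgf_deriv_def[abs_def] exgpd_variance_def trigamma_def
      by (auto intro!: derivative_eq_intros not_nonpos_Ints_real)
  next
    case 3
    then show ?thesis
      unfolding exgpd_cgf_deriv_def[abs_def] exgpd_variance_def trigamma_def
      by (auto intro!: derivative_eq_intros not_nonpos_Ints_real)
  qed (auto intro!: derivative_eq_intros not_nonpos_Ints_real
        simp: exgpd_cgf_deriv_def[abs_def] exgpd_variance_def trigamma_def)
qed

lemma has_bochner_integral_distributed:
  assumes "distributed M N X f" and "g \<in> borel_measurable N" and "\<And>x. x \<in> space N \<Longrightarrow> 0 \<le> f x"
    and "has_bochner_integral N (\<lambda>x. f x * g x) I"
  shows "has_bochner_integral M (\<lambda>x. g (X x)) I"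
  using assms distributed_integrable[OF assms(1-3)] distributed_integral[OF assms(1-3)]
  by (simp add: has_bochner_integral_iff)

lemma distributed_exgpd_variance:
  assumes M: "prob_space M" and \<sigma>: "0 < \<sigma>"
    and Y: "distributed M lborel Y (\<lambda>y. ennreal (exgpd_density \<sigma> \<xi> y))"
  shows "integrable M (\<lambda>x. (Y x)\<^sup>2)" and "prob_space.variance M Y = exgpd_variance \<xi>"
proof -
  interpret prob_space M by (rule M)
  define d where "d = 1 / (2 * (1 + \<bar>\<xi>\<bar>))"
  have d: "0 < d" by (simp add: d_def add_pos_nonneg)
  have domain: "-1 < s \<and> (0 < \<xi> \<longrightarrow> s < 1/\<xi>)" if "\<bar>s\<bar> \<le> d" for s
  proof -
    have "d < 1" "0 < \<xi> \<Longrightarrow> d < 1/\<xi>"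
      by (auto simp: d_def field_simps)
    then show ?thesis using that by auto
  qed
  have "has_bochner_integral M (\<lambda>x. exp (s * Y x)) (exp (exgpd_cgf \<sigma> \<xi> s))" if "\<bar>s\<bar> \<le> d" for s
    using has_bochner_integral_distributed[OF Y _ _ exgpd_mgf[OF \<sigma>]] domain[OF that]
      exgpd_density_nonneg[OF \<sigma>] by auto
  from moments_from_cgf[OF d _ this exgpd_cgf_has_real_derivative exgpd_cgf_deriv_has_real_derivative]
  show "integrable M (\<lambda>x. (Y x)\<^sup>2)" and "variance Y = exgpd_variance \<xi>"
    using Y domain d by (auto dest: distributed_measurable)
qed

lemma trigamma_eq_suminf:
  assumes "0 < x"
  shows "trigamma x = (\<Sum>k. 1 / (x + real k)\<^sup>2)"
  using Polygamma_LIMSEQ[of x 1] assms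
  by (simp add: trigamma_def sums_iff eval_nat_numeral inverse_eq_divide)

lemma trigamma_pos: "0 < x \<Longrightarrow> 0 < trigamma x"
  unfolding trigamma_def by (intro Polygamma_real_odd_pos not_nonpos_Ints_real) auto

lemma trigamma_1: "trigamma 1 = pi\<^sup>2 / 6"
  using trigamma_eq_suminf[of 1] inverse_squares_sums
  by (simp add: sums_iff inverse_eq_divide add.commute)

theorem mainTheorem5:
  fixes M :: "'a measure" and Y :: "'a \<Rightarrow> real" and \<sigma> \<xi> :: real
  assumes "prob_space M"
    and "\<sigma> > 0"
    and "distributed M lborel Y (\<lambda>y. ennreal (exgpd_density \<sigma> \<xi> y))"
  shows "integrable M (\<lambda>x. (Y x)\<^sup>2)
    \<and> (\<xi> < 0 \<longrightarrow>
         prob_space.variance M Y = trigamma 1 - trigamma (1 - 1 / \<xi>)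
       \<and> prob_space.variance M Y = pi\<^sup>2 / 6 - (\<Sum>k. 1 / (real (Suc k) - 1 / \<xi>)\<^sup>2))
    \<and> (\<xi> > 0 \<longrightarrow>
         prob_space.variance M Y = trigamma 1 + trigamma (1 / \<xi>)
       \<and> prob_space.variance M Y = pi\<^sup>2 / 6 + (\<Sum>k. 1 / (real (Suc k) + 1 / \<xi> - 1)\<^sup>2))
    \<and> (\<xi> = 0 \<longrightarrow>
         prob_space.variance M Y = trigamma 1 \<and> prob_space.variance M Y = pi\<^sup>2 / 6)
    \<and> (\<xi> > 0 \<longrightarrow> prob_space.variance M Y > pi\<^sup>2 / 6)
    \<and> (\<xi> < 0 \<longrightarrow> prob_space.variance M Y < pi\<^sup>2 / 6)"
proof -
  note variance = distributed_exgpd_variance[OF assms]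
  have neg: "0 < trigamma (1 - 1/\<xi>)" "trigamma (1 - 1/\<xi>) = (\<Sum>k. 1 / (real (Suc k) - 1/\<xi>)\<^sup>2)"
    if "\<xi> < 0"
  proof -
    have "0 < 1 - 1/\<xi>" using that divide_less_0_1_iff[of \<xi>] by linarith
    then show "0 < trigamma (1 - 1/\<xi>)"
      by (rule trigamma_pos)
    from \<open>0 < 1 - 1/\<xi>\<close> show "trigamma (1 - 1/\<xi>) = (\<Sum>k. 1 / (real (Suc k) - 1/\<xi>)\<^sup>2)"
      by (simp add: trigamma_eq_suminf algebra_simps)
  qed
  have pos: "0 < trigamma (1/\<xi>)" "trigamma (1/\<xi>) = (\<Sum>k. 1 / (real (Suc k) + 1/\<xi> - 1)\<^sup>2)"
    if "0 < \<xi>"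
    using that trigamma_pos[of "1/\<xi>"] trigamma_eq_suminf[of "1/\<xi>"] by (auto simp: algebra_simps)
  show ?thesis
    using variance neg pos trigamma_1 by (auto simp: exgpd_variance_def)
qed

end
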